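(* Let $\mathcal G$ be a good pseudogroup on a compact metric space $X$, let $\mathcal G_1$ be a good generating set of $\mathcal G$ and $\mathcal G_2$ the corresponding compacted generating set. Then there exists $\rho>0$ such that every Borel probability measure $\mu$ on $X$ that is $(\mathcal G,\mathcal G_2)$-weakly expansive with constant $\rho$ (i.e. $\mu(\Phi^2_\rho(x))=0$ for $\mu$-a.e. $x\in X$) is $(\mathcal G,\mathcal G_1)$-expansive with constant $\rho/2$ (i.e. $\mu(\Phi^1_{\rho/2}(x))=0$ for every $x\in X$).
   Context: $(X,d)$ is a compact metric space. $\mathrm{Homeo}(X)$ is the set of homeomorphisms $g:D_g\to R_g$ between open subsets of $X$; compositions are taken on their natural domains, $D_{h\circ g}=g^{-1}(D_h)$ (possibly empty). A pseudogroup is a set $\mathcal G\subset\mathrm{Homeo}(X)$ containing $\mathrm{id}_X$, closed under composition, inversion and restriction to open subsets of the domain, and such that if $g\in\mathrm{Homeo}(X)$ and $D_g$ has an open cover $\mathcal U$ with $g|_U\in\mathcal G$ for all $U\in\mathcal U$, then $g\in\mathcal G$. For $\Gamma\subset\mathrm{Homeo}(X)$ with $\bigcup_{g\in\Gamma}(D_g\cup R_g)=X$, the pseudogroup generated by $\Gamma$ consists of all $g\in\mathrm{Homeo}(X)$ such that each $x\in D_g$ has a neighborhood $U_x\subset D_g$ with $g|_{U_x}=g_1^{e_1}\circ\cdots\circ g_k^{e_k}|_{U_x}$ for some $g_i\in\Gamma$, $e_i\in\{\pm1\}$; $\Gamma$ generates $\mathcal G$ if this pseudogroup equals $\mathcal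 G$. $\Gamma$ is symmetric if $\mathrm{id}_X\in\Gamma$ and $g^{-1}\in\Gamma$ for all $g\in\Gamma$. A finite symmetric generating set $\mathcal G_1$ of $\mathcal G$ is good if for each $g\in\mathcal G_1$ there is a compact $K_g\subset D_g$ such that $\mathcal G_2=\{g|_{\mathrm{int}(K_g)}: g\in\mathcal G_1\}$ still generates $\mathcal G$; $\mathcal G_2$ is called the compacted generating set, and $\mathcal G$ is good if it has a good generating set. For $i=1,2$ let $\mathcal G^i_n=\{h_1\circ\cdots\circ h_n: h_j\in\mathcal G_i\}$, $\mathcal G^{i,x}_n=\{g\in\mathcal G^i_n: x\in D_g\}$ and $\Phi^i_\delta(x)=\{y\in X: d(g(x),g(y))\le\delta\ \text{for all } n\in\mathbb N \text{ and all } g\in\mathcal G^{i,x}_n\cap\mathcal G^{i,y}_n\}$ (Bowen ball). *)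

theory Defs
  imports "HOL-Probability.Probability"
begin

text \<open>Partial maps on the compact metric space X (the ambient type 'a, with UNIV compact)
  are represented as maps 'a \<Rightarrow> 'a option; the domain D_g is dom g and the range R_g is ran g.
  Composition on natural domains is map_comp, restriction is restrict_map.\<close>

definition minv :: "('a \<Rightarrow> 'a option) \<Rightarrow> ('a \<Rightarrow> 'a option)" where
  "minv g = (\<lambda>y. if y \<in> ran g then Some (THE x. g x = Some y) else None)"

definition Homeo :: "('a::topological_space \<Rightarrow> 'a option) set" where
  "Homeo = {g. open (dom g) \<and> open (ran g) \<and>
              (\<exists>f'. homeomorphism (dom g) (ran g) (\<lambda>x. the (g x)) f')}"

definition pseudogroup :: "('a::topological_space \<Rightarrow> 'a option) set \<Rightarrow> bool" where
  "pseudogroup G \<longleftrightarrow>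
     G \<subseteq> Homeo \<and> Some \<in> G \<and>
     (\<forall>g\<in>G. \<forall>h\<in>G. h \<circ>\<^sub>m g \<in> G) \<and>
     (\<forall>g\<in>G. minv g \<in> G) \<and>
     (\<forall>g\<in>G. \<forall>U. open U \<and> U \<subseteq> dom g \<longrightarrow> g |` U \<in> G) \<and>
     (\<forall>g\<in>Homeo. \<forall>\<U>. (\<forall>U\<in>\<U>. open U) \<and> \<Union>\<U> = dom g \<and> (\<forall>U\<in>\<U>. g |` U \<in> G) \<longrightarrow> g \<in> G)"

text \<open>Word g_1^{e_1} o ... o g_k^{e_k}; the boolean flag True means exponent +1, False means -1.\<close>
fun word :: "(('a \<Rightarrow> 'a option) \<times> bool) list \<Rightarrow> ('a \<Rightarrow> 'a option)" where
  "word [] = Some"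
| "word ((h, e) # ws) = (if e then h else minv h) \<circ>\<^sub>m word ws"

definition generated_pseudogroup ::
  "('a::topological_space \<Rightarrow> 'a option) set \<Rightarrow> ('a \<Rightarrow> 'a option) set" where
  "generated_pseudogroup \<Gamma> =
     {g \<in> Homeo. \<forall>x\<in>dom g. \<exists>U. open U \<and> x \<in> U \<and> U \<subseteq> dom g \<and>
        (\<exists>ws. (\<forall>(h, e)\<in>set ws. h \<in> \<Gamma>) \<and> (\<forall>y\<in>U. word ws y = g y))}"

definition generates ::
  "('a::topological_space \<Rightarrow> 'a option) set \<Rightarrow> ('a \<Rightarrow> 'a option) set \<Rightarrow> bool" where
  "generates \<Gamma> G \<longleftrightarrow> \<Gamma> \<subseteq> Homeo \<and> (\<Union>g\<in>\<Gamma>. dom g \<union> ran g) = UNIV \<and>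
                       generated_pseudogroup \<Gamma> = G"

definition symmetric_set :: "('a \<Rightarrow> 'a option) set \<Rightarrow> bool" where
  "symmetric_set \<Gamma> \<longleftrightarrow> Some \<in> \<Gamma> \<and> (\<forall>g\<in>\<Gamma>. minv g \<in> \<Gamma>)"

definition compacted :: "('a::topological_space \<Rightarrow> 'a option) set \<Rightarrow>
    (('a \<Rightarrow> 'a option) \<Rightarrow> 'a set) \<Rightarrow> ('a \<Rightarrow> 'a option) set" where
  "compacted G1 K = (\<lambda>g. g |` interior (K g)) ` G1"

definition good_generating_set :: "('a::topological_space \<Rightarrow> 'a option) set \<Rightarrow>
    (('a \<Rightarrow> 'a option) \<Rightarrow> 'a set) \<Rightarrow> ('a \<Rightarrow> 'a option) set \<Rightarrow> bool" where
  "good_generating_set G1 K G \<longleftrightarrow>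
     finite G1 \<and> symmetric_set G1 \<and> generates G1 G \<and>
     (\<forall>g\<in>G1. compact (K g) \<and> K g \<subseteq> dom g) \<and> generates (compacted G1 K) G"

definition comps :: "('a \<Rightarrow> 'a option) set \<Rightarrow> nat \<Rightarrow> ('a \<Rightarrow> 'a option) set" where
  "comps \<Gamma> n = {foldr (\<circ>\<^sub>m) hs Some | hs. length hs = n \<and> set hs \<subseteq> \<Gamma>}"

definition bowen_ball :: "('a::metric_space \<Rightarrow> 'a option) set \<Rightarrow> real \<Rightarrow> 'a \<Rightarrow> 'a set" where
  "bowen_ball \<Gamma> \<delta> x = {y. \<forall>n\<ge>1. \<forall>g\<in>comps \<Gamma> n.
       x \<in> dom g \<and> y \<in> dom g \<longrightarrow> dist (the (g x)) (the (g y)) \<le> \<delta>}"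

end

theory Submission
  imports Defs
begin

text \<open>Choose \<open>\<rho> > 0\<close> such that the \<open>\<rho>\<close>-neighbourhood of every compact \<open>K g\<close> lies in \<open>D g\<close>;
  this is possible because \<open>\<G>\<^sub>1\<close> is finite. Let \<open>y, z \<in> \<Phi>\<^sup>1\<^sub>\<rho>\<^sub>/\<^sub>2(x)\<close> and take a word in the compacted
  generators defined at \<open>y\<close>. Along the corresponding word in \<open>\<G>\<^sub>1\<close> the orbit of \<open>x\<close> stays
  \<open>\<rho>/2\<close>-close to the orbit of \<open>y\<close>, which runs through the sets \<open>K g\<close>; hence that word is defined
  at \<open>x\<close> as well, and the triangle inequality through the orbit of \<open>x\<close> gives \<open>z \<in> \<Phi>\<^sup>2\<^sub>\<rho>(y)\<close>.
  So \<open>\<Phi>\<^sup>1\<^sub>\<rho>\<^sub>/\<^sub>2(x)\<close> is contained in the closed set \<open>\<Phi>\<^sup>2\<^sub>\<rho>(y)\<close> for each of its points \<open>y\<close>; if it had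
  positive measure, one of these points would lie outside the exceptional null set, and
  \<open>\<Phi>\<^sup>2\<^sub>\<rho>(y)\<close> would be a null set containing it.\<close>

lemma finite_compact_subset_open_uniform_margin:
  fixes K D :: "'i \<Rightarrow> 'a::metric_space set"
  assumes "finite I"
    and "\<And>i. i \<in> I \<Longrightarrow> compact (K i)" "\<And>i. i \<in> I \<Longrightarrow> open (D i)" "\<And>i. i \<in> I \<Longrightarrow> K i \<subseteq> D i"
  obtains e where "e > 0" "\<And>i. i \<in> I \<Longrightarrow> (\<Union>u\<in>K i. ball u e) \<subseteq> D i"
proof -
  have margin: "\<forall>\<^sub>F e in at_right 0. (\<Union>u\<in>K i. ball u e) \<subseteq> D i" if "i \<in> I" for i
  proof -
    obtain \<epsilon> where "\<epsilon> > 0" "(\<Union>u\<in>K i. ball u \<epsilon>) \<subseteq> D i"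
      using compact_subset_open_imp_ball_epsilon_subset assms(2-4) \<open>i \<in> I\<close> by metis
    then show ?thesis
      unfolding eventually_at_right_field by (intro exI[of _ \<epsilon>]) force
  qed
  have "\<forall>\<^sub>F e in at_right 0. e > 0 \<and> (\<forall>i\<in>I. (\<Union>u\<in>K i. ball u e) \<subseteq> D i)"
    by (intro eventually_conj eventually_at_right_less eventually_ball_finite[OF \<open>finite I\<close>] ballI margin)
  then show ?thesis
    using that eventually_happens'[OF trivial_limit_at_right_real] by blast
qed

definition continuous_partial_map :: "('a::topological_space \<Rightarrow> 'b::topological_space option) \<Rightarrow> bool" where
  "continuous_partial_map g \<longleftrightarrow> open (dom g) \<and> continuous_on (dom g) (\<lambda>x. the (g x))"

lemma continuous_partial_map_Homeo: "g \<in> Homeo \<Longrightarrow> continuous_partial_map g"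
  unfolding Homeo_def continuous_partial_map_def homeomorphism_def by auto

lemma continuous_partial_map_restrict:
  assumes "continuous_partial_map g" "open U"
  shows "continuous_partial_map (g |` U)"
proof -
  have "dom (g |` U) = dom g \<inter> U"
    by auto
  moreover have "continuous_on (dom g \<inter> U) (\<lambda>x. the ((g |` U) x))"
    using assms unfolding continuous_partial_map_def
    by (auto intro: continuous_on_eq continuous_on_subset)
  ultimately show ?thesis
    using assms unfolding continuous_partial_map_def by auto
qed

lemma continuous_partial_map_comp:
  assumes g: "continuous_partial_map g" and h: "continuous_partial_map h"
  shows "continuous_partial_map (h \<circ>\<^sub>m g)"
proof -
  have dom_eq: "dom (h \<circ>\<^sub>m g) = dom g \<inter> (\<lambda>x. the (g x)) -` dom h"
    by (auto simp: map_comp_def split: option.splits)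
  have "continuous_on (dom (h \<circ>\<^sub>m g)) (\<lambda>x. the (h (the (g x))))"
    using g h unfolding continuous_partial_map_def dom_eq
    by (auto intro: continuous_on_compose2 continuous_on_subset)
  moreover have "the ((h \<circ>\<^sub>m g) x) = the (h (the (g x)))" if "x \<in> dom (h \<circ>\<^sub>m g)" for x
    using that by (auto simp: map_comp_def split: option.splits)
  moreover have "open (dom (h \<circ>\<^sub>m g))"
    using g h unfolding continuous_partial_map_def dom_eq by (simp add: continuous_open_preimage)
  ultimately show ?thesis
    unfolding continuous_partial_map_def by (auto cong: continuous_on_cong)
qed

lemma continuous_partial_map_foldr:
  "(\<And>h. h \<in> set hs \<Longrightarrow> continuous_partial_map h) \<Longrightarrow> continuous_partial_map (foldr (\<circ>\<^sub>m) hs Some)"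
proof (induction hs)
  case Nil
  show ?case
    by (simp add: continuous_partial_map_def)
next
  case (Cons h hs)
  then show ?case
    by (simp add: continuous_partial_map_comp)
qed

lemma closed_bowen_ball:
  fixes \<Gamma> :: "('a::metric_space \<Rightarrow> 'a option) set"
  assumes "\<And>g. g \<in> \<Gamma> \<Longrightarrow> continuous_partial_map g"
  shows "closed (bowen_ball \<Gamma> \<delta> y)"
proof -
  define S :: "('a \<Rightarrow> 'a option) \<Rightarrow> 'a set" where "S g = {z. y \<in> dom g \<and> z \<in> dom g \<longrightarrow> dist (the (g y)) (the (g z)) \<le> \<delta>}" for g
  have closed_S: "closed (S g)" if "g \<in> comps \<Gamma> n" for g n
  proof (cases "y \<in> dom g")
    case True
    have "continuous_partial_map g"
      using that assms continuous_partial_map_foldr unfolding comps_def by blast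
    then have "open (dom g \<inter> (\<lambda>z. the (g z)) -` (- cball (the (g y)) \<delta>))"
      unfolding continuous_partial_map_def by (auto intro: continuous_open_preimage)
    moreover have "S g = - (dom g \<inter> (\<lambda>z. the (g z)) -` (- cball (the (g y)) \<delta>))"
      using True by (auto simp: S_def)
    ultimately show ?thesis
      by (simp add: closed_def)
  qed (simp add: S_def)
  have "bowen_ball \<Gamma> \<delta> y = (\<Inter>n\<in>{1..}. \<Inter>g\<in>comps \<Gamma> n. S g)"
    unfolding bowen_ball_def S_def by auto
  then show ?thesis
    by (auto intro: closed_S)
qed

lemma map_comp_Some_left [simp]: "Some \<circ>\<^sub>m m = m"
  by (rule ext) (simp add: map_comp_def split: option.split)

lemma bowen_ball_dist_le:
  assumes "z \<in> bowen_ball \<Gamma> \<delta> x" "Some \<in> \<Gamma>" "set hs \<subseteq> \<Gamma>"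
    and "x \<in> dom (foldr (\<circ>\<^sub>m) hs Some)" "z \<in> dom (foldr (\<circ>\<^sub>m) hs Some)"
  shows "dist (the (foldr (\<circ>\<^sub>m) hs Some x)) (the (foldr (\<circ>\<^sub>m) hs Some z)) \<le> \<delta>"
proof -
  have "foldr (\<circ>\<^sub>m) hs Some \<in> comps \<Gamma> (Suc (length hs))"
    using assms(2,3) unfolding comps_def by (intro CollectI exI[of _ "Some # hs"]) simp
  moreover have "1 \<le> Suc (length hs)"
    by simp
  ultimately show ?thesis
    using assms(1,4,5) unfolding bowen_ball_def by blast
qed

lemma lift_compacted_word:
  assumes "set bs \<subseteq> G1"
    and margin: "\<And>b. b \<in> G1 \<Longrightarrow> (\<Union>u\<in>K b. ball u e) \<subseteq> dom b"
    and close: "\<And>ls. set ls \<subseteq> G1 \<Longrightarrow> x \<in> dom (foldr (\<circ>\<^sub>m) ls Some) \<Longrightarrow> w \<in> dom (foldr (\<circ>\<^sub>m) ls Some)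
        \<Longrightarrow> dist (the (foldr (\<circ>\<^sub>m) ls Some w)) (the (foldr (\<circ>\<^sub>m) ls Some x)) < e"
    and "w \<in> dom (foldr (\<circ>\<^sub>m) (map (\<lambda>b. b |` interior (K b)) bs) Some)"
  shows "x \<in> dom (foldr (\<circ>\<^sub>m) bs Some) \<and>
    foldr (\<circ>\<^sub>m) bs Some w = foldr (\<circ>\<^sub>m) (map (\<lambda>b. b |` interior (K b)) bs) Some w"
  using assms(1,4)
proof (induction bs)
  case Nil
  then show ?case by simp
next
  case (Cons b bs)
  define F where "F = foldr (\<circ>\<^sub>m) bs Some"
  define F\<^sub>K where "F\<^sub>K = foldr (\<circ>\<^sub>m) (map (\<lambda>b. b |` interior (K b)) bs) Some"
  have "w \<in> dom ((b |` interior (K b)) \<circ>\<^sub>m F\<^sub>K)"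
    using Cons.prems(2) by (simp add: F\<^sub>K_def)
  then obtain u v where u: "F\<^sub>K w = Some u" "u \<in> interior (K b)" "b u = Some v"
    by (auto simp: map_comp_Some_iff restrict_map_def split: if_splits)
  with Cons have "x \<in> dom F" "F w = Some u"
    by (auto simp: F_def F\<^sub>K_def)
  then obtain u' where u': "F x = Some u'"
    by auto
  have "dist u u' < e"
    using close[of bs] Cons.prems(1) \<open>F w = Some u\<close> u' by (simp add: F_def domIff)
  moreover have "u \<in> K b"
    using u(2) interior_subset by blast
  ultimately have "u' \<in> (\<Union>u\<in>K b. ball u e)"
    by auto
  moreover have "b \<in> G1"
    using Cons.prems(1) by simp
  ultimately have "u' \<in> dom b"
    using margin by blast
  then have "x \<in> dom (b \<circ>\<^sub>m F)" "(b \<circ>\<^sub>m F) w = ((b |` interior (K b)) \<circ>\<^sub>m F\<^sub>K) w"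
    using u u' \<open>F w = Some u\<close> by (simp_all add: domIff)
  moreover have fold_eq: "foldr (\<circ>\<^sub>m) (b # bs) Some = b \<circ>\<^sub>m F"
    by (simp add: F_def)
  moreover have fold_K_eq: "foldr (\<circ>\<^sub>m) (map (\<lambda>b. b |` interior (K b)) (b # bs)) Some
      = (b |` interior (K b)) \<circ>\<^sub>m F\<^sub>K"
    by (simp only: F\<^sub>K_def list.map foldr_Cons o_apply)
  ultimately show ?case
    unfolding fold_eq fold_K_eq by (intro conjI)
qed

lemma bowen_ball_subset_compacted_bowen_ball:
  fixes G1 :: "('a::metric_space \<Rightarrow> 'a option) set"
  assumes "Some \<in> G1" "e > 0"
    and margin: "\<And>b. b \<in> G1 \<Longrightarrow> (\<Union>u\<in>K b. ball u e) \<subseteq> dom b"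
    and y: "y \<in> bowen_ball G1 (e / 2) x"
  shows "bowen_ball G1 (e / 2) x \<subseteq> bowen_ball (compacted G1 K) e y"
proof
  fix z assume z: "z \<in> bowen_ball G1 (e / 2) x"
  have close: "dist (the (foldr (\<circ>\<^sub>m) ls Some w)) (the (foldr (\<circ>\<^sub>m) ls Some x)) < e"
    if "w \<in> bowen_ball G1 (e / 2) x" "set ls \<subseteq> G1"
      "x \<in> dom (foldr (\<circ>\<^sub>m) ls Some)" "w \<in> dom (foldr (\<circ>\<^sub>m) ls Some)" for w ls
  proof -
    have "dist (the (foldr (\<circ>\<^sub>m) ls Some x)) (the (foldr (\<circ>\<^sub>m) ls Some w)) \<le> e / 2"
      by (rule bowen_ball_dist_le[OF that(1) \<open>Some \<in> G1\<close> that(2-4)])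
    then show ?thesis
      using \<open>e > 0\<close> by (simp add: dist_commute)
  qed
  show "z \<in> bowen_ball (compacted G1 K) e y"
    unfolding bowen_ball_def
  proof (intro CollectI allI impI ballI)
    fix n g assume "g \<in> comps (compacted G1 K) n" and yz: "y \<in> dom g \<and> z \<in> dom g"
    then obtain hs where g: "g = foldr (\<circ>\<^sub>m) hs Some" and "hs \<in> lists (compacted G1 K)"
      unfolding comps_def by blast
    then have "hs \<in> map (\<lambda>b. b |` interior (K b)) ` lists G1"
      unfolding compacted_def lists_image by blast
    then obtain bs where "set bs \<subseteq> G1" and hs: "hs = map (\<lambda>b. b |` interior (K b)) bs"
      by (auto simp: lists_eq_set)
    let ?F = "foldr (\<circ>\<^sub>m) bs Some"
    from yz have "y \<in> dom (foldr (\<circ>\<^sub>m) (map (\<lambda>b. b |` interior (K b)) bs) Some)"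
      and "z \<in> dom (foldr (\<circ>\<^sub>m) (map (\<lambda>b. b |` interior (K b)) bs) Some)"
      unfolding g hs by blast+
    then have "x \<in> dom ?F" "?F y = g y" "?F z = g z"
      using lift_compacted_word[OF \<open>set bs \<subseteq> G1\<close> margin close[OF y]]
        lift_compacted_word[OF \<open>set bs \<subseteq> G1\<close> margin close[OF z]]
      unfolding g hs by blast+
    then have "y \<in> dom ?F" "z \<in> dom ?F"
      using yz by (simp_all add: domIff)
    have "dist (the (g y)) (the (g z)) \<le> dist (the (?F x)) (the (?F y)) + dist (the (?F x)) (the (?F z))"
      unfolding \<open>?F y = g y\<close> [symmetric] \<open>?F z = g z\<close> [symmetric] by (rule dist_triangle3)
    also have "\<dots> \<le> e / 2 + e / 2"
      using bowen_ball_dist_le[OF _ \<open>Some \<in> G1\<close> \<open>set bs \<subseteq> G1\<close> \<open>x \<in> dom ?F\<close>] y z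
        \<open>y \<in> dom ?F\<close> \<open>z \<in> dom ?F\<close> by (intro add_mono)
    finally show "dist (the (g y)) (the (g z)) \<le> e"
      by simp
  qed
qed

lemma emeasure_eq_0_if_covered_by_AE_null:
  assumes "\<And>y. y \<in> B \<Longrightarrow> C y \<in> sets M" "\<And>y. y \<in> B \<Longrightarrow> B \<subseteq> C y"
    and "AE y in M. emeasure M (C y) = 0"
  shows "emeasure M B = 0"
proof (rule ccontr)
  assume B: "emeasure M B \<noteq> 0"
  from assms(3) obtain N where N: "{y \<in> space M. emeasure M (C y) \<noteq> 0} \<subseteq> N" "emeasure M N = 0" "N \<in> sets M"
    by (auto elim: AE_E)
  have "\<not> B \<subseteq> N"
    using B N(2,3) emeasure_mono by (metis le_zero_eq)
  then obtain y where "y \<in> B" "y \<notin> N"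
    by blast
  moreover have "B \<subseteq> space M"
    using B emeasure_neq_0_sets sets.sets_into_space by blast
  ultimately have "emeasure M (C y) = 0"
    using N(1) by blast
  then show False
    using B emeasure_mono[OF assms(2,1)] \<open>y \<in> B\<close> by (metis le_zero_eq)
qed

theorem theoremA:
  fixes G G1 :: "('a::metric_space \<Rightarrow> 'a option) set"
    and K :: "('a \<Rightarrow> 'a option) \<Rightarrow> 'a set"
  assumes "compact (UNIV :: 'a set)"
    and "pseudogroup G"
    and "good_generating_set G1 K G"
  shows "\<exists>\<rho>>0. \<forall>\<mu>::'a measure.
           prob_space \<mu> \<and> sets \<mu> = sets borel \<and>
           (AE x in \<mu>. emeasure \<mu> (bowen_ball (compacted G1 K) \<rho> x) = 0)
           \<longrightarrow> (\<forall>x. emeasure \<mu> (bowen_ball G1 (\<rho> / 2) x) = 0)"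
proof -
  have "finite G1" "Some \<in> G1" and cont: "\<And>g. g \<in> G1 \<Longrightarrow> continuous_partial_map g"
    and "\<And>g. g \<in> G1 \<Longrightarrow> compact (K g) \<and> K g \<subseteq> dom g"
    using assms(3) continuous_partial_map_Homeo
    unfolding good_generating_set_def symmetric_set_def generates_def by auto
  then obtain \<rho> where "\<rho> > 0" and margin: "\<And>g. g \<in> G1 \<Longrightarrow> (\<Union>u\<in>K g. ball u \<rho>) \<subseteq> dom g"
    using finite_compact_subset_open_uniform_margin[of G1 K dom]
    unfolding continuous_partial_map_def by metis
  have borel: "bowen_ball (compacted G1 K) \<rho> y \<in> sets borel" for y
    using cont by (intro borel_closed closed_bowen_ball)
      (auto simp: compacted_def intro: continuous_partial_map_restrict)
  have cover: "bowen_ball G1 (\<rho> / 2) x \<subseteq> bowen_ball (compacted G1 K) \<rho> y"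
    if "y \<in> bowen_ball G1 (\<rho> / 2) x" for x y
    using bowen_ball_subset_compacted_bowen_ball[OF \<open>Some \<in> G1\<close> \<open>\<rho> > 0\<close> margin that] .
  show ?thesis
  proof (intro exI[of _ \<rho>] conjI allI impI \<open>\<rho> > 0\<close>)
    fix \<mu> :: "'a measure" and x
    assume \<mu>: "prob_space \<mu> \<and> sets \<mu> = sets borel \<and>
      (AE y in \<mu>. emeasure \<mu> (bowen_ball (compacted G1 K) \<rho> y) = 0)"
    show "emeasure \<mu> (bowen_ball G1 (\<rho> / 2) x) = 0"
    proof (rule emeasure_eq_0_if_covered_by_AE_null)
      show "bowen_ball (compacted G1 K) \<rho> y \<in> sets \<mu>" for y
        using \<mu> borel by simp
    qed (use \<mu> cover in auto)
  qed
qed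

end
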